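(* The category of cubes $\widehat{\square}$ of all adjacency-preserving maps is the unique shell-complete category of cubes.
   Context: $[0]=\{()\}$, $[n]=\{0,1\}^n$ ($n\ge1$) with the product order; ${\rm PoSet}$ is the category of posets with strictly increasing maps. Face maps $\delta_i^\alpha:[n-1]\to[n]$ insert $\alpha\in\{0,1\}$ at position $i$; $\square$ is the subcategory of ${\rm PoSet}$ with objects $[n]$, $n\ge0$, generated by the face maps. With $d(\epsilon,\epsilon')=\sum_i|\epsilon_i-\epsilon'_i|$, a map $f:[m]\to[n]$ is adjacency-preserving if strictly increasing and $d(x,y)=1\Rightarrow d(f(x),f(y))=1$. A category of cubes is a subcategory $\mathcal A\subset{\rm PoSet}$ with objects $\{[n]:n\ge0\}$, containing $\square$, whose morphisms are all adjacency-preserving; $\widehat\square$ consists of all adjacency-preserving maps. An $\mathcal A$-set is a presheaf on $\mathcal A$; $\mathcal A[p]=\mathcal A(-,[p])$; $K_{\le1}$ denotes truncation to dimensions $\le 1$ (a presheaf on the full subcategory on $[0],[1]$). $\mathrm{cosk}_1^{\mathcal A}$ is the right adjoint of the truncation functor $K\mapsto K_{\le1}$ from $\mathcal A$-sets to $1$-dimensional $\mathcal A$-sets. $\mathcal A$ is shell-complete if for every $p\ge2$ the canonical map $\mathcal A[p]\to\mathrm{cosk}_1^{\mathcal A}(\mathcal A[p]_{\le1})$ (adjoint to the identity of $\mathcal A[p]_{\le1}$) is an isomorphism. *)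

theory Defs
  imports "HOL-Library.FuncSet"
begin

text \<open>Elements of [n] are boolean lists of length n (False = 0, True = 1);
  [0] = {[]} is the one-point poset.\<close>
definition cube :: "nat \<Rightarrow> bool list set" where
  "cube n = {x. length x = n}"

definition cle :: "bool list \<Rightarrow> bool list \<Rightarrow> bool" where
  "cle x y \<longleftrightarrow> list_all2 (\<le>) x y"

definition clt :: "bool list \<Rightarrow> bool list \<Rightarrow> bool" where
  "clt x y \<longleftrightarrow> cle x y \<and> x \<noteq> y"

definition hdist :: "bool list \<Rightarrow> bool list \<Rightarrow> nat" where
  "hdist x y = card {i. i < length x \<and> x ! i \<noteq> y ! i}"

text \<open>A morphism [m] -> [n] is a triple (m, n, f) with f an extensional map
  from cube m to cube n.\<close>
type_synonym cmor = "nat \<times> nat \<times> (bool list \<Rightarrow> bool list)"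

definition strictly_increasing :: "nat \<Rightarrow> nat \<Rightarrow> (bool list \<Rightarrow> bool list) \<Rightarrow> bool" where
  "strictly_increasing m n f \<longleftrightarrow>
     f \<in> cube m \<rightarrow>\<^sub>E cube n \<and>
     (\<forall>x\<in>cube m. \<forall>y\<in>cube m. clt x y \<longrightarrow> clt (f x) (f y))"

definition adjacency_preserving :: "nat \<Rightarrow> nat \<Rightarrow> (bool list \<Rightarrow> bool list) \<Rightarrow> bool" where
  "adjacency_preserving m n f \<longleftrightarrow>
     strictly_increasing m n f \<and>
     (\<forall>x\<in>cube m. \<forall>y\<in>cube m. hdist x y = 1 \<longrightarrow> hdist (f x) (f y) = 1)"

definition ccomp :: "nat \<Rightarrow> (bool list \<Rightarrow> bool list) \<Rightarrow> (bool list \<Rightarrow> bool list) \<Rightarrow> (bool list \<Rightarrow> bool list)" where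
  "ccomp m g f = restrict (g \<circ> f) (cube m)"

definition cid :: "nat \<Rightarrow> (bool list \<Rightarrow> bool list)" where
  "cid n = restrict id (cube n)"

text \<open>Face map delta_i^alpha : [n-1] -> [n] inserting alpha at position i
  (positions counted 0,...,n-1 here), for n >= 1.\<close>
definition face :: "nat \<Rightarrow> nat \<Rightarrow> bool \<Rightarrow> cmor" where
  "face n i a = (n - 1, n, restrict (\<lambda>x. take i x @ a # drop i x) (cube (n - 1)))"

text \<open>A subcategory of PoSet with objects [n], n >= 0 (identities, closure under
  composition), containing the cube category generated by the face maps, and
  all of whose morphisms are adjacency-preserving.\<close>
definition category_of_cubes :: "cmor set \<Rightarrow> bool" where
  "category_of_cubes A \<longleftrightarrow>
     (\<forall>(m, n, f)\<in>A. adjacency_preserving m n f) \<and>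
     (\<forall>n. (n, n, cid n) \<in> A) \<and>
     (\<forall>m n p f g. (m, n, f) \<in> A \<longrightarrow> (n, p, g) \<in> A \<longrightarrow> (m, p, ccomp m g f) \<in> A) \<and>
     (\<forall>n i a. 1 \<le> n \<longrightarrow> i < n \<longrightarrow> face n i a \<in> A)"

definition hatbox :: "cmor set" where
  "hatbox = {(m, n, f). adjacency_preserving m n f}"

text \<open>A[p]([k]) = A([k],[p]).\<close>
definition Hom :: "cmor set \<Rightarrow> nat \<Rightarrow> nat \<Rightarrow> (bool list \<Rightarrow> bool list) set" where
  "Hom A k p = {f. (k, p, f) \<in> A}"

text \<open>Index set of the truncation A[n]_{<=1}: pairs (k, g) with k in {0,1}, g in A([k],[n]).\<close>
definition trunc_dom :: "cmor set \<Rightarrow> nat \<Rightarrow> (nat \<times> (bool list \<Rightarrow> bool list)) set" where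
  "trunc_dom A n = {(k, g). k \<le> 1 \<and> g \<in> Hom A k n}"

text \<open>cosk_1^A(K)([n]) = Hom(A[n]_{<=1}, K) (maps of 1-dimensional A-sets), here for
  K = A[p]_{<=1}: natural families sigma_k : A([k],[n]) -> A([k],[p]), k in {0,1},
  naturality w.r.t. all morphisms of A between [0] and [1].\<close>
definition cosk1_rep :: "cmor set \<Rightarrow> nat \<Rightarrow> nat \<Rightarrow>
    ((nat \<times> (bool list \<Rightarrow> bool list)) \<Rightarrow> (bool list \<Rightarrow> bool list)) set" where
  "cosk1_rep A p n =
     {\<sigma>. \<sigma> \<in> extensional (trunc_dom A n) \<and>
          (\<forall>(k, g)\<in>trunc_dom A n. \<sigma> (k, g) \<in> Hom A k p) \<and>
          (\<forall>j k u g. j \<le> 1 \<longrightarrow> k \<le> 1 \<longrightarrow> (j, k, u) \<in> A \<longrightarrow> g \<in> Hom A k n \<longrightarrow>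
              \<sigma> (j, ccomp j g u) = ccomp j (\<sigma> (k, g)) u)}"

text \<open>Component at [n] of the canonical map A[p] -> cosk_1^A(A[p]_{<=1}),
  adjoint to the identity: f |-> (g |-> f o g).\<close>
definition cosk1_unit :: "cmor set \<Rightarrow> nat \<Rightarrow> nat \<Rightarrow> (bool list \<Rightarrow> bool list) \<Rightarrow>
    ((nat \<times> (bool list \<Rightarrow> bool list)) \<Rightarrow> (bool list \<Rightarrow> bool list))" where
  "cosk1_unit A p n f = (\<lambda>kg\<in>trunc_dom A n. ccomp (fst kg) f (snd kg))"

text \<open>Shell-complete: for every p >= 2 the canonical map is an isomorphism of
  A-sets, i.e. bijective at every level [n].\<close>
definition shell_complete :: "cmor set \<Rightarrow> bool" where
  "shell_complete A \<longleftrightarrow>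
     (\<forall>p\<ge>2. \<forall>n. bij_betw (cosk1_unit A p n) (Hom A n p) (cosk1_rep A p n))"

end

theory Submission
  imports Defs
begin

text \<open>Maps out of [0] and [1] are exactly the vertices and the edges (covering pairs
  x \<prec> y) of a cube, and a category of cubes contains all of them, since they are composites
  of face maps. Hence all categories of cubes have the same 1-truncations and the same
  1-coskeleta. In the category of all adjacency-preserving maps, a compatible family of vertices
  and edges is a vertex map sending covers to covers; since the strict order is the transitive
  closure of the covering relation, such a map is adjacency-preserving, which gives
  shell-completeness. If A is shell-complete as well, the canonical maps for A and for the full
  category are bijections onto the same coskeleton and agree on A, so A has all maps into [p]
  for p \<ge> 2. Maps into [0] and [1] start in dimension at most 1: a strictly increasing map
  never decreases the number of 1s of a vertex, so it cannot lower the dimension.\<close>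

section \<open>Order and distance on the cubes\<close>

lemma in_cube [simp]: "x \<in> cube n \<longleftrightarrow> length x = n"
  by (simp add: cube_def)

lemma hdist_Nil [simp]: "hdist [] y = 0"
  by (simp add: hdist_def)

lemma hdist_Cons [simp]: "hdist (a # x) (b # y) = (if a = b then 0 else 1) + hdist x y"
proof -
  let ?S = "Suc ` {i. i < length x \<and> x ! i \<noteq> y ! i}"
  let ?Z = "{i::nat. i = 0 \<and> a \<noteq> b}"
  have "{i. i < length (a # x) \<and> (a # x) ! i \<noteq> (b # y) ! i} = ?Z \<union> ?S"
    by (auto simp: less_Suc_eq_0_disj)
  moreover have "card (?Z \<union> ?S) = card ?Z + card ?S"
    by (rule card_Un_disjoint) (auto intro: finite_subset[of _ "{0}"])
  moreover have "card ?S = hdist x y"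
    by (simp add: card_image hdist_def)
  ultimately show ?thesis
    by (simp add: hdist_def)
qed

lemma hdist_self [simp]: "hdist x x = 0"
  by (simp add: hdist_def)

lemma hdist_append:
  "length u = length u' \<Longrightarrow> hdist (u @ v) (u' @ v') = hdist u u' + hdist v v'"
  by (induction u u' rule: list_induct2) auto

lemma hdist_commute: "length x = length y \<Longrightarrow> hdist x y = hdist y x"
  by (induction x y rule: list_induct2) auto

lemma hdist_eq_0_iff: "length x = length y \<Longrightarrow> hdist x y = 0 \<longleftrightarrow> x = y"
  by (induction x y rule: list_induct2) auto

lemma cle_Cons [simp]: "cle (a # x) (b # y) \<longleftrightarrow> a \<le> b \<and> cle x y"
  by (auto simp: cle_def)

lemma cle_refl [simp]: "cle x x"
  by (simp add: cle_def list_all2_refl)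

lemma cle_length: "cle x y \<Longrightarrow> length x = length y"
  by (simp add: cle_def list_all2_lengthD)

lemma cle_append: "length u = length u' \<Longrightarrow> cle (u @ v) (u' @ v') \<longleftrightarrow> cle u u' \<and> cle v v'"
  by (simp add: cle_def list_all2_append)

lemma cle_trans: "cle x y \<Longrightarrow> cle y z \<Longrightarrow> cle x z"
  unfolding cle_def by (rule list_all2_trans) auto

lemma cle_antisym: "cle x y \<Longrightarrow> cle y x \<Longrightarrow> x = y"
  unfolding cle_def by (induction x y rule: list_all2_induct) auto

lemma clt_trans: "clt x y \<Longrightarrow> clt y z \<Longrightarrow> clt x z"
  unfolding clt_def using cle_trans cle_antisym by blast

lemma clt_length: "clt x y \<Longrightarrow> length x = length y"
  by (simp add: clt_def cle_length)

definition cover :: "bool list \<Rightarrow> bool list \<Rightarrow> bool" where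
  "cover x y \<longleftrightarrow> (\<exists>pre suf. x = pre @ False # suf \<and> y = pre @ True # suf)"

lemma not_cover_Nil [simp]: "\<not> cover [] y"
  by (simp add: cover_def)

lemma cover_Cons [simp]: "cover (a # x) (a # y) \<longleftrightarrow> cover x y"
  unfolding cover_def by (auto simp: Cons_eq_append_conv)

lemma coverI [intro]: "cover (pre @ False # suf) (pre @ True # suf)"
  by (auto simp: cover_def)

lemma cover_imp_clt: "cover x y \<Longrightarrow> clt x y"
  by (auto simp: cover_def clt_def cle_append)

lemma cover_imp_hdist: "cover x y \<Longrightarrow> hdist x y = 1"
  by (auto simp: cover_def hdist_append)

lemma cover_length: "cover x y \<Longrightarrow> length x = length y"
  by (auto simp: cover_def)

lemma hdist_eq_1_iff_cover:
  "length x = length y \<Longrightarrow> hdist x y = 1 \<longleftrightarrow> cover x y \<or> cover y x"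
proof (induction x y rule: list_induct2)
  case (Cons a x b y)
  show ?case
  proof (cases "a = b")
    case False
    then have "hdist (a # x) (b # y) = 1 \<longleftrightarrow> x = y"
      using Cons.hyps hdist_eq_0_iff by auto
    also have "\<dots> \<longleftrightarrow> cover (a # x) (b # y) \<or> cover (b # y) (a # x)"
      using False by (auto simp: cover_def Cons_eq_append_conv)
    finally show ?thesis .
  qed (use Cons.IH in simp)
qed simp

lemma cover_iff_clt_hdist: "cover x y \<longleftrightarrow> clt x y \<and> hdist x y = 1"
proof
  assume "clt x y \<and> hdist x y = 1"
  moreover have "\<not> clt y x" if "clt x y"
    using that cle_antisym by (auto simp: clt_def)
  ultimately show "cover x y"
    using hdist_eq_1_iff_cover[OF clt_length] cover_imp_clt by blast
qed (simp add: cover_imp_clt cover_imp_hdist)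

lemma clt_imp_cover_cle:
  assumes "clt x y"
  shows "\<exists>z. cover x z \<and> cle z y \<and> hdist z y < hdist x y"
  using clt_length[OF assms] assms
proof (induction x y rule: list_induct2)
  case (Cons a x b y)
  show ?case
  proof (cases "a = b")
    case True
    with "Cons.prems" obtain z where "cover x z" "cle z y" "hdist z y < hdist x y"
      using "Cons.IH" by (auto simp: clt_def)
    with True show ?thesis
      by (intro exI[of _ "a # z"]) auto
  next
    case False
    with "Cons.prems" have "a = False" "b = True" "cle x y"
      by (auto simp: clt_def)
    with "Cons.hyps" show ?thesis
      using coverI[of "[]"] by (intro exI[of _ "True # x"]) (auto simp: hdist_eq_0_iff)
  qed
qed (simp add: clt_def)

lemma clt_cover_induct [consumes 1, case_names cover trans]:
  assumes "clt x y"
    and cover: "\<And>x y. cover x y \<Longrightarrow> R x y"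
    and trans: "\<And>x y z. R x y \<Longrightarrow> R y z \<Longrightarrow> R x z"
  shows "R x y"
  using assms(1)
proof (induction "hdist x y" arbitrary: x rule: less_induct)
  case less
  then obtain z where z: "cover x z" "cle z y" "hdist z y < hdist x y"
    using clt_imp_cover_cle by blast
  show ?case
  proof (cases "z = y")
    case False
    with z less show ?thesis
      by (meson cover trans clt_def)
  qed (use z cover in simp)
qed

lemma clt_imp_count_less: "clt x y \<Longrightarrow> count_list x True < count_list y True"
  by (induction rule: clt_cover_induct) (auto simp: cover_def)

lemma strictly_increasing_count_le:
  assumes f: "strictly_increasing m n f" and x: "length x = m"
  shows "count_list x True \<le> count_list (f x) True"
  using x
proof (induction "count_list x True" arbitrary: x)
  case (Suc k)
  then obtain pre suf where x: "x = pre @ True # suf" and "True \<notin> set pre" "count_list suf True = k"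
    by (metis count_list_Suc_split_first)
  then have k: "count_list (pre @ False # suf) True = k"
    by simp
  have "clt (f (pre @ False # suf)) (f x)"
    using f Suc.prems cover_imp_clt[OF coverI] by (auto simp: strictly_increasing_def x)
  then show ?case
    using Suc k clt_imp_count_less x by fastforce
qed simp

lemma strictly_increasing_dim_le: "strictly_increasing m n f \<Longrightarrow> m \<le> n"
proof -
  assume f: "strictly_increasing m n f"
  have "length (f (replicate m True)) = n"
    using f by (auto simp: strictly_increasing_def PiE_iff)
  moreover have "count_list (replicate m True) True = m"
    by (induction m) auto
  ultimately show "m \<le> n"
    using strictly_increasing_count_le[OF f, of "replicate m True"] count_le_length
    by (metis dual_order.trans length_replicate)
qed

section \<open>Categories of cubes\<close>

lemma mem_hatbox [simp]: "(m, n, f) \<in> hatbox \<longleftrightarrow> adjacency_preserving m n f"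
  by (simp add: hatbox_def)

lemma adjacency_preserving_PiE: "adjacency_preserving m n f \<Longrightarrow> f \<in> cube m \<rightarrow>\<^sub>E cube n"
  by (simp add: adjacency_preserving_def strictly_increasing_def)

lemma adjacency_preserving_cid: "adjacency_preserving n n (cid n)"
  by (auto simp: adjacency_preserving_def strictly_increasing_def cid_def)

lemma adjacency_preserving_ccomp:
  "adjacency_preserving m n f \<Longrightarrow> adjacency_preserving n p g \<Longrightarrow>
    adjacency_preserving m p (ccomp m g f)"
  unfolding adjacency_preserving_def strictly_increasing_def ccomp_def
  by (auto simp: PiE_iff)

lemma adjacency_preserving_isometry:
  assumes "\<And>x. length x = m \<Longrightarrow> length (h x) = n"
    and "\<And>x y. length x = m \<Longrightarrow> length y = m \<Longrightarrow> cle (h x) (h y) \<longleftrightarrow> cle x y"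
    and "\<And>x y. length x = m \<Longrightarrow> length y = m \<Longrightarrow> hdist (h x) (h y) = hdist x y"
  shows "adjacency_preserving m n (restrict h (cube m))"
proof -
  have "h x \<noteq> h y \<longleftrightarrow> x \<noteq> y" if "length x = m" "length y = m" for x y
    using assms(1,3) hdist_eq_0_iff that by metis
  then show ?thesis
    using assms(1,2,3) by (auto simp: adjacency_preserving_def strictly_increasing_def clt_def)
qed

lemma adjacency_preserving_face:
  "i < n \<Longrightarrow> adjacency_preserving (n - 1) n (restrict (\<lambda>x. take i x @ a # drop i x) (cube (n - 1)))"
proof (rule adjacency_preserving_isometry)
  fix x y :: "bool list"
  assume "i < n" "length x = n - 1" "length y = n - 1"
  then have "length (take i x) = length (take i y)"
    by simp
  then show "cle (take i x @ a # drop i x) (take i y @ a # drop i y) \<longleftrightarrow> cle x y"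
    and "hdist (take i x @ a # drop i x) (take i y @ a # drop i y) = hdist x y"
    using cle_append[of "take i x" "take i y" "drop i x" "drop i y"]
      hdist_append[of "take i x" "take i y" "drop i x" "drop i y"]
    by (simp_all add: cle_append hdist_append)
qed simp

lemma category_of_cubes_hatbox: "category_of_cubes hatbox"
  using adjacency_preserving_face
  by (auto simp: category_of_cubes_def hatbox_def face_def
      adjacency_preserving_cid adjacency_preserving_ccomp)

section \<open>Maps out of [0] and [1]\<close>

lemma cube_0 [simp]: "cube 0 = {[]}"
  by (auto simp: cube_def)

lemma cube_1 [simp]: "cube (Suc 0) = {[False], [True]}"
  by (auto simp: cube_def length_Suc_conv)

definition vertex :: "bool list \<Rightarrow> bool list \<Rightarrow> bool list" where
  "vertex w = restrict (\<lambda>_. w) (cube 0)"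

definition edge :: "bool list \<Rightarrow> bool list \<Rightarrow> bool list \<Rightarrow> bool list" where
  "edge x y = restrict (\<lambda>b. if hd b then y else x) (cube 1)"

lemma vertex_apply [simp]: "vertex w [] = w"
  by (simp add: vertex_def)

lemma edge_apply [simp]: "edge x y [False] = x" "edge x y [True] = y"
  by (simp_all add: edge_def)

lemma adjacency_preserving_from_0_iff:
  "adjacency_preserving 0 n g \<longleftrightarrow> (\<exists>w. length w = n \<and> g = vertex w)"
proof
  assume "adjacency_preserving 0 n g"
  then have g: "g \<in> cube 0 \<rightarrow>\<^sub>E cube n"
    by (rule adjacency_preserving_PiE)
  then have "g = vertex (g [])"
    by (intro extensionalityI[of g "cube 0"]) (auto simp: vertex_def PiE_iff)
  with g show "\<exists>w. length w = n \<and> g = vertex w"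
    by (intro exI[of _ "g []"]) (auto simp: PiE_iff)
next
  assume "\<exists>w. length w = n \<and> g = vertex w"
  then obtain w where "length w = n" "g = vertex w"
    by blast
  moreover have "vertex w \<in> cube 0 \<rightarrow>\<^sub>E cube (length w)"
    unfolding vertex_def by (rule restrict_PiE_iff[THEN iffD2]) simp
  ultimately show "adjacency_preserving 0 n g"
    by (simp add: adjacency_preserving_def strictly_increasing_def clt_def)
qed

lemma adjacency_preserving_from_1_cover:
  "adjacency_preserving 1 n g \<Longrightarrow> cover (g [False]) (g [True])"
  unfolding cover_iff_clt_hdist adjacency_preserving_def strictly_increasing_def
  by (simp add: clt_def)

lemma adjacency_preserving_from_1_iff:
  "adjacency_preserving 1 n g \<longleftrightarrow> (\<exists>x y. length x = n \<and> cover x y \<and> g = edge x y)"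
proof
  assume g: "adjacency_preserving 1 n g"
  then have "g \<in> cube 1 \<rightarrow>\<^sub>E cube n"
    by (rule adjacency_preserving_PiE)
  then have "g = edge (g [False]) (g [True])" and "length (g [False]) = n"
    by (intro extensionalityI[of g "cube 1"], auto simp: edge_def PiE_iff)
  with adjacency_preserving_from_1_cover[OF g] show "\<exists>x y. length x = n \<and> cover x y \<and> g = edge x y"
    by blast
next
  assume "\<exists>x y. length x = n \<and> cover x y \<and> g = edge x y"
  then obtain x y where "length x = n" "cover x y" "g = edge x y"
    by blast
  moreover have "hdist y x = 1"
    using \<open>cover x y\<close> cover_imp_hdist cover_length hdist_commute by metis
  ultimately show "adjacency_preserving 1 n g"
    using cover_imp_clt cover_imp_hdist cover_length
    by (auto simp: adjacency_preserving_def strictly_increasing_def edge_def clt_def)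
qed

text \<open>The inclusion of [m] as the subcube u * [m] * v of [length u + m + length v]; it is a
  composite of face maps, hence lies in every category of cubes.\<close>
definition pad :: "bool list \<Rightarrow> bool list \<Rightarrow> nat \<Rightarrow> bool list \<Rightarrow> bool list" where
  "pad u v m = restrict (\<lambda>x. u @ x @ v) (cube m)"

lemma category_of_cubes_cid: "category_of_cubes A \<Longrightarrow> (n, n, cid n) \<in> A"
  by (simp add: category_of_cubes_def)

lemma category_of_cubes_ccomp:
  "category_of_cubes A \<Longrightarrow> (m, n, f) \<in> A \<Longrightarrow> (n, p, g) \<in> A \<Longrightarrow> (m, p, ccomp m g f) \<in> A"
  unfolding category_of_cubes_def by blast

lemma category_of_cubes_face:
  "category_of_cubes A \<Longrightarrow> i \<le> n \<Longrightarrow>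
    (n, Suc n, restrict (\<lambda>x. take i x @ a # drop i x) (cube n)) \<in> A"
  unfolding category_of_cubes_def face_def
  by (metis diff_Suc_1 le_imp_less_Suc le_add1 plus_1_eq_Suc)

lemma category_of_cubes_subset_hatbox: "category_of_cubes A \<Longrightarrow> A \<subseteq> hatbox"
  by (auto simp: category_of_cubes_def hatbox_def)

lemma pad_mem:
  assumes A: "category_of_cubes A"
  shows "(m, length u + m + length v, pad u v m) \<in> A"
proof (induction u)
  case Nil
  show ?case
  proof (induction v rule: rev_induct)
    case Nil
    have "pad [] [] m = cid m"
      unfolding pad_def cid_def by (rule restrict_ext) simp
    then show ?case
      using category_of_cubes_cid[OF A] by simp
  next
    case (snoc c v)
    let ?N = "m + length v"
    have "ccomp m (restrict (\<lambda>x. take ?N x @ c # drop ?N x) (cube ?N)) (pad [] v m) = pad [] (v @ [c]) m"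
      unfolding ccomp_def pad_def by (rule restrict_ext) simp
    then show ?case
      using category_of_cubes_ccomp[OF A snoc category_of_cubes_face[OF A order_refl, where a = c]] by simp
  qed
next
  case (Cons a u)
  let ?N = "length u + m + length v"
  have "ccomp m (restrict (\<lambda>x. take 0 x @ a # drop 0 x) (cube ?N)) (pad u v m) = pad (a # u) v m"
    unfolding ccomp_def pad_def by (rule restrict_ext) simp
  then show ?case
    using category_of_cubes_ccomp[OF A Cons category_of_cubes_face[OF A le0, where a = a]] by simp
qed

lemma category_of_cubes_low_dim:
  assumes A: "category_of_cubes A" and k: "k \<le> 1"
  shows "(k, n, g) \<in> A \<longleftrightarrow> (k, n, g) \<in> hatbox"
proof
  assume g: "(k, n, g) \<in> hatbox"
  consider "k = 0" | "k = 1"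
    using k by linarith
  then show "(k, n, g) \<in> A"
  proof cases
    case 1
    with g obtain w where "length w = n" "g = vertex w"
      using adjacency_preserving_from_0_iff[of n g] by auto
    moreover have "vertex w = pad w [] 0"
      unfolding vertex_def pad_def by (rule restrict_ext) simp
    ultimately show ?thesis
      using pad_mem[OF A, of 0 w "[]"] 1 by simp
  next
    case 2
    with g obtain x y where "length x = n" "cover x y" "g = edge x y"
      using adjacency_preserving_from_1_iff[of n g] by auto
    then obtain pre suf where "x = pre @ False # suf" "g = edge x (pre @ True # suf)"
      by (auto simp: cover_def)
    moreover have "edge (pre @ False # suf) (pre @ True # suf) = pad pre suf 1"
      by (auto simp: edge_def pad_def)
    ultimately show ?thesis
      using pad_mem[OF A, of 1 pre suf] 2 \<open>length x = n\<close> by simp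
  qed
qed (use category_of_cubes_subset_hatbox[OF A] in blast)

section \<open>The canonical map to the 1-coskeleton\<close>

lemma mem_Hom [simp]: "g \<in> Hom A k n \<longleftrightarrow> (k, n, g) \<in> A"
  by (simp add: Hom_def)

lemma mem_trunc_dom [simp]: "(k, g) \<in> trunc_dom A n \<longleftrightarrow> k \<le> 1 \<and> (k, n, g) \<in> A"
  by (simp add: trunc_dom_def)

lemma ccomp_assoc:
  "u \<in> cube j \<rightarrow>\<^sub>E cube k \<Longrightarrow> ccomp j f (ccomp j g u) = ccomp j (ccomp k f g) u"
  unfolding ccomp_def by (rule restrict_ext) (simp add: PiE_iff)

lemma cosk1_unit_mem_cosk1_rep:
  assumes A: "category_of_cubes A" and f: "(n, p, f) \<in> A"
  shows "cosk1_unit A p n f \<in> cosk1_rep A p n"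
proof -
  have "cosk1_unit A p n f (j, ccomp j g u) = ccomp j (cosk1_unit A p n f (k, g)) u"
    if "j \<le> 1" "k \<le> 1" "(j, k, u) \<in> A" "(k, n, g) \<in> A" for j k u g
  proof -
    have "(j, k, u) \<in> hatbox"
      using that(3) category_of_cubes_subset_hatbox[OF A] by blast
    then have "u \<in> cube j \<rightarrow>\<^sub>E cube k"
      by (simp add: adjacency_preserving_PiE)
    then show ?thesis
      using that category_of_cubes_ccomp[OF A that(3,4)] by (simp add: cosk1_unit_def ccomp_assoc)
  qed
  then show ?thesis
    using category_of_cubes_ccomp[OF A _ f]
    by (auto simp: cosk1_rep_def cosk1_unit_def)
qed

lemma adjacency_preserving_vertex: "adjacency_preserving 0 (length w) (vertex w)"
  using adjacency_preserving_from_0_iff by blast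

lemma cosk1_unit_hatbox_vertex:
  "length x = n \<Longrightarrow> cosk1_unit hatbox p n f (0, vertex x) [] = f x"
  using adjacency_preserving_vertex[of x] by (simp add: cosk1_unit_def ccomp_def)

lemma inj_on_cosk1_unit_hatbox: "inj_on (cosk1_unit hatbox p n) (Hom hatbox n p)"
proof (rule inj_onI)
  fix f f' assume "f \<in> Hom hatbox n p" "f' \<in> Hom hatbox n p"
    and eq: "cosk1_unit hatbox p n f = cosk1_unit hatbox p n f'"
  then have "f \<in> cube n \<rightarrow>\<^sub>E cube p" "f' \<in> cube n \<rightarrow>\<^sub>E cube p"
    by (simp_all add: adjacency_preserving_PiE)
  then show "f = f'"
    using cosk1_unit_hatbox_vertex[of _ n p f] cosk1_unit_hatbox_vertex[of _ n p f'] eq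
    by (intro extensionalityI[of f "cube n"]) (auto simp: PiE_iff)
qed

text \<open>Naturality along the vertices [0] \<rightarrow> [k] makes a compatible family determined by its
  values on vertices.\<close>
lemma cosk1_rep_hatbox_apply:
  assumes \<sigma>: "\<sigma> \<in> cosk1_rep hatbox p n" and "k \<le> 1" "adjacency_preserving k n g" "length x = k"
  shows "\<sigma> (k, g) x = \<sigma> (0, vertex (g x)) []"
proof -
  have "ccomp 0 g (vertex x) = vertex (g x)"
    unfolding ccomp_def vertex_def by (rule restrict_ext) simp
  moreover have "\<sigma> (0, ccomp 0 g (vertex x)) = ccomp 0 (\<sigma> (k, g)) (vertex x)"
    using \<sigma> assms(2-4) adjacency_preserving_vertex[of x] by (auto simp: cosk1_rep_def)
  ultimately show ?thesis
    by (simp add: ccomp_def)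
qed

lemma cover_preserving_imp_adjacency_preserving:
  assumes f: "f \<in> cube n \<rightarrow>\<^sub>E cube p"
    and cover: "\<And>x y. length x = n \<Longrightarrow> cover x y \<Longrightarrow> cover (f x) (f y)"
  shows "adjacency_preserving n p f"
proof -
  have "length x = n \<longrightarrow> length y = n \<and> clt (f x) (f y)" if "clt x y" for x y
    using that
  proof (induction rule: clt_cover_induct)
    case (cover x y)
    then show ?case
      using cover_length cover_imp_clt assms(2) by metis
  qed (use clt_trans in blast)
  moreover have "hdist (f x) (f y) = 1" if "length x = n" "length y = n" "hdist x y = 1" for x y
  proof -
    have "cover x y \<or> cover y x"
      using that hdist_eq_1_iff_cover by simp
    then have "cover (f x) (f y) \<or> cover (f y) (f x)"
      using that cover by blast
    moreover have "length (f x) = length (f y)"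
      using f that by (auto simp: PiE_iff)
    ultimately show ?thesis
      using hdist_eq_1_iff_cover by blast
  qed
  ultimately show ?thesis
    using f by (auto simp: adjacency_preserving_def strictly_increasing_def)
qed

lemma cosk1_unit_hatbox_surj:
  assumes \<sigma>: "\<sigma> \<in> cosk1_rep hatbox p n"
  shows "\<exists>f. adjacency_preserving n p f \<and> cosk1_unit hatbox p n f = \<sigma>"
proof -
  define f where "f = restrict (\<lambda>x. \<sigma> (0, vertex x) []) (cube n)"
  have \<sigma>_apply: "\<sigma> (k, g) x = f (g x)" if "k \<le> 1" "adjacency_preserving k n g" "length x = k"
    for k g x
    using cosk1_rep_hatbox_apply[OF \<sigma> that] adjacency_preserving_PiE[OF that(2)] that(3)
    by (auto simp: f_def PiE_iff)
  have \<sigma>_mem: "adjacency_preserving k p (\<sigma> (k, g))" if "k \<le> 1" "adjacency_preserving k n g" for k g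
    using \<sigma> that by (auto simp: cosk1_rep_def)
  have "f \<in> cube n \<rightarrow>\<^sub>E cube p"
  proof -
    have "length (f x) = p" if "length x = n" for x
      using \<sigma>_mem[of 0 "vertex x"] adjacency_preserving_vertex[of x] that
        adjacency_preserving_from_0_iff[of p] by (auto simp: f_def)
    then show ?thesis
      by (auto simp: f_def)
  qed
  moreover have "cover (f x) (f y)" if "length x = n" "cover x y" for x y
  proof -
    have g: "adjacency_preserving 1 n (edge x y)"
      using that adjacency_preserving_from_1_iff by blast
    then show ?thesis
      using adjacency_preserving_from_1_cover[OF \<sigma>_mem[OF _ g]] \<sigma>_apply[OF _ g] by simp
  qed
  ultimately have f_ap: "adjacency_preserving n p f"
    by (rule cover_preserving_imp_adjacency_preserving)
  have "cosk1_unit hatbox p n f = \<sigma>"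
  proof (rule extensionalityI[of _ "trunc_dom hatbox n"])
    show "\<sigma> \<in> extensional (trunc_dom hatbox n)"
      using \<sigma> by (simp add: cosk1_rep_def)
    fix kg assume "kg \<in> trunc_dom hatbox n"
    then obtain k g where kg: "kg = (k, g)" "k \<le> 1" "adjacency_preserving k n g"
      by (cases kg) auto
    have "\<sigma> (k, g) \<in> extensional (cube k)"
      using adjacency_preserving_PiE[OF \<sigma>_mem[OF kg(2,3)]] by (simp add: PiE_iff)
    then have "ccomp k f g = \<sigma> (k, g)"
      unfolding ccomp_def using \<sigma>_apply[OF kg(2,3)]
      by (intro extensionalityI[of _ "cube k"]) auto
    then show "cosk1_unit hatbox p n f kg = \<sigma> kg"
      using kg by (simp add: cosk1_unit_def)
  qed (simp add: cosk1_unit_def)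
  with f_ap show ?thesis
    by blast
qed

lemma cosk1_unit_hatbox_bij:
  "bij_betw (cosk1_unit hatbox p n) (Hom hatbox n p) (cosk1_rep hatbox p n)"
proof (rule bij_betw_imageI[OF inj_on_cosk1_unit_hatbox])
  show "cosk1_unit hatbox p n ` Hom hatbox n p = cosk1_rep hatbox p n"
  proof (intro equalityI subsetI)
    fix \<sigma> assume "\<sigma> \<in> cosk1_rep hatbox p n"
    then obtain f where "adjacency_preserving n p f" "cosk1_unit hatbox p n f = \<sigma>"
      using cosk1_unit_hatbox_surj by blast
    then show "\<sigma> \<in> cosk1_unit hatbox p n ` Hom hatbox n p"
      by (auto intro: rev_image_eqI)
  qed (use cosk1_unit_mem_cosk1_rep[OF category_of_cubes_hatbox] in \<open>auto simp del: mem_hatbox\<close>)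
qed

lemma shell_complete_hatbox: "shell_complete hatbox"
  by (simp add: shell_complete_def cosk1_unit_hatbox_bij)

section \<open>Uniqueness\<close>

lemma trunc_dom_eq_hatbox: "category_of_cubes A \<Longrightarrow> trunc_dom A n = trunc_dom hatbox n"
  by (auto simp: trunc_dom_def category_of_cubes_low_dim simp del: mem_hatbox)

lemma cosk1_rep_eq_hatbox:
  assumes A: "category_of_cubes A"
  shows "cosk1_rep A p n = cosk1_rep hatbox p n"
  unfolding cosk1_rep_def trunc_dom_eq_hatbox[OF A]
  by (auto simp: category_of_cubes_low_dim[OF A] simp del: mem_hatbox)

lemma cosk1_unit_eq_hatbox:
  assumes A: "category_of_cubes A"
  shows "cosk1_unit A p n = cosk1_unit hatbox p n"
  by (rule ext) (simp add: cosk1_unit_def trunc_dom_eq_hatbox[OF A])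

lemma shell_complete_Hom_eq_hatbox:
  assumes A: "category_of_cubes A" "shell_complete A" and p: "2 \<le> p"
  shows "Hom A n p = Hom hatbox n p"
proof -
  have "cosk1_unit hatbox p n ` Hom A n p = cosk1_unit hatbox p n ` Hom hatbox n p"
    using A p bij_betw_imp_surj_on[OF cosk1_unit_hatbox_bij]
    by (auto simp: shell_complete_def cosk1_rep_eq_hatbox cosk1_unit_eq_hatbox bij_betw_def)
  moreover have "Hom A n p \<subseteq> Hom hatbox n p"
    using category_of_cubes_subset_hatbox[OF A(1)] by (auto simp: Hom_def)
  ultimately show ?thesis
    using inj_on_image_eq_iff[OF inj_on_cosk1_unit_hatbox] by blast
qed

lemma category_of_cubes_shell_complete_unique:
  assumes A: "category_of_cubes A" "shell_complete A"
  shows "A = hatbox"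
proof (intro equalityI category_of_cubes_subset_hatbox[OF A(1)] subsetI, clarify)
  fix n p f assume f: "(n, p, f) \<in> hatbox"
  show "(n, p, f) \<in> A"
  proof (cases "2 \<le> p")
    case True
    with f show ?thesis
      using shell_complete_Hom_eq_hatbox[OF A True, of n] mem_Hom by metis
  next
    case False
    moreover have "n \<le> p"
      using f strictly_increasing_dim_le by (auto simp: adjacency_preserving_def)
    ultimately show ?thesis
      using f category_of_cubes_low_dim[OF A(1)] by simp
  qed
qed

theorem theorem7p15:
  shows "category_of_cubes hatbox \<and> shell_complete hatbox \<and>
         (\<forall>A. category_of_cubes A \<and> shell_complete A \<longrightarrow> A = hatbox)"
  using category_of_cubes_hatbox shell_complete_hatbox category_of_cubes_shell_complete_unique
  by blast

end
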